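(* Let $X$ be a setoid. Define $\mathsf{join}:\mathfrak{S}(\mathfrak{S}X)\to\mathfrak{S}X$ by $\mathsf{join}\ \hat f := f$ and $$\mathsf{join}(\mathsf{glue}\ o\ F\ G) := \mathsf{glue}\ o\ \big(\mathsf{join}(\mathsf{map}\,(\lambda x.\,\mathsf{SplitL}\ x\ o)\,F)\big)\ \big(\mathsf{join}(\mathsf{map}\,(\lambda x.\,\mathsf{SplitR}\ x\ o)\,G)\big).$$ Then $(\mathfrak{S}, \mathsf{const}, \mathsf{map}, \mathsf{join})$ is a monad up to $\asymp$: $\mathsf{join}$ and $\mathsf{map}\,\varphi$ (for respectful $\varphi$) respect $\asymp$, and for all $f\in\mathfrak{S}X$ and $H\in\mathfrak{S}(\mathfrak{S}(\mathfrak{S}X))$: $\mathsf{join}(\hat f)\asymp f$, $\mathsf{join}(\mathsf{map}\ \mathsf{const}\ f)\asymp f$, and $\mathsf{join}(\mathsf{join}\ H)\asymp\mathsf{join}(\mathsf{map}\ \mathsf{join}\ H)$.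
   Context: Step functions. For a type $X$, $\mathfrak{S}X$ is the inductive type of (formal, rational) step functions on $[0,1]$: it has the constructors $\mathsf{const}\ x$ for $x\in X$ (also written $\hat x$), and $\mathsf{glue}\ o\ f\ g$ for $o\in(0,1)\cap\mathbb{Q}$ and $f,g\in\mathfrak{S}X$. Split. For $a\in(0,1)\cap\mathbb{Q}$: $\mathsf{SplitL}\ \hat x\ a := \hat x$, $\mathsf{SplitR}\ \hat x\ a:=\hat x$, and $\mathsf{SplitL}(\mathsf{glue}\ o\ f_l\ f_r)\ a :=$ $\mathsf{SplitL}\ f_l\ (a/o)$ if $a<o$; $f_l$ if $a=o$; $\mathsf{glue}\ (o/a)\ f_l\ (\mathsf{SplitL}\ f_r\ \tfrac{a-o}{1-o})$ if $a>o$. $\mathsf{SplitR}(\mathsf{glue}\ o\ f_l\ f_r)\ a :=$ $\mathsf{glue}\ \tfrac{o-a}{1-a}\ (\mathsf{SplitR}\ f_l\ (a/o))\ f_r$ if $a<o$; $f_r$ if $a=o$; $\mathsf{SplitR}\ f_r\ \tfrac{a-o}{1-o}$ if $a>o$. Map and ap. $\mathsf{map}\ \varphi\ \hat x := \widehat{\varphi x}$, $\mathsf{map}\ \varphi\ (\mathsf{glue}\ o\ f\ g):=\mathsf{glue}\ o\ (\mathsf{map}\ \varphi\ f)(\mathsf{map}\ \varphi\ g)$. For $F\in\mathfrak{S}(X\Rightarrow Y)$, $x\in\mathfrak{S}X$: $\hat\varphi @ x := \mathsf{map}\ \varphi\ x$, and $(\mathsf{glue}\ o\ F_l\ F_r)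 @ x := \mathsf{glue}\ o\ (F_l @ \mathsf{SplitL}\ x\ o)\ (F_r @ \mathsf{SplitR}\ x\ o)$. Write $f\{\circledast\}g := (\lambda u v. u\circledast v)\circ f @ g$ where $\varphi\circ x:=\mathsf{map}\ \varphi\ x$. Fold. $\mathsf{fold}\ \varphi\ \psi\ \hat x:=\varphi x$, $\mathsf{fold}\ \varphi\ \psi\ (\mathsf{glue}\ o\ f\ g) := \psi\ o\ (\mathsf{fold}\ \varphi\ \psi\ f)(\mathsf{fold}\ \varphi\ \psi\ g)$. $\mathsf{fold}_\star$ is $\mathsf{fold}\ \mathrm{id}\ (\lambda o\,p\,q.\ p\wedge q)$. Equivalence. For a setoid $X$ and $f,g\in\mathfrak{S}X$, $f\asymp_{\mathfrak{S}X} g := \mathsf{fold}_\star(f\{\asymp_X\}g)$; $\mathfrak{S}X$ is itself a setoid with this relation, so $\mathfrak{S}(\mathfrak{S}X)$ etc. carry the iterated relation. *)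

theory Defs
  imports Main "HOL.Rat"
begin

typedef oq = "{q::rat. 0 < q \<and> q < 1}"
  by (rule exI[of _ "1/2"]) simp

text \<open>Formal rational step functions on [0,1].\<close>
datatype 'a stepfun = Const 'a | Glue oq "'a stepfun" "'a stepfun"

abbreviation smap :: "('a \<Rightarrow> 'b) \<Rightarrow> 'a stepfun \<Rightarrow> 'b stepfun" where
  "smap \<equiv> map_stepfun"

lemma smap_simps: "smap \<phi> (Const x) = Const (\<phi> x)"
  "smap \<phi> (Glue c f g) = Glue c (smap \<phi> f) (smap \<phi> g)"
  by simp_all

fun SplitL :: "'a stepfun \<Rightarrow> oq \<Rightarrow> 'a stepfun" where
  "SplitL (Const x) a = Const x"
| "SplitL (Glue c fl fr) a =
     (let a' = Rep_oq a; o' = Rep_oq c in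
      if a' < o' then SplitL fl (Abs_oq (a' / o'))
      else if a' = o' then fl
      else Glue (Abs_oq (o' / a')) fl (SplitL fr (Abs_oq ((a' - o') / (1 - o')))))"

fun SplitR :: "'a stepfun \<Rightarrow> oq \<Rightarrow> 'a stepfun" where
  "SplitR (Const x) a = Const x"
| "SplitR (Glue c fl fr) a =
     (let a' = Rep_oq a; o' = Rep_oq c in
      if a' < o' then Glue (Abs_oq ((o' - a') / (1 - a'))) (SplitR fl (Abs_oq (a' / o'))) fr
      else if a' = o' then fr
      else SplitR fr (Abs_oq ((a' - o') / (1 - o'))))"

fun ap :: "('a \<Rightarrow> 'b) stepfun \<Rightarrow> 'a stepfun \<Rightarrow> 'b stepfun" where
  "ap (Const \<phi>) x = smap \<phi> x"
| "ap (Glue c Fl Fr) x = Glue c (ap Fl (SplitL x c)) (ap Fr (SplitR x c))"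

fun sfold :: "('a \<Rightarrow> 'b) \<Rightarrow> (oq \<Rightarrow> 'b \<Rightarrow> 'b \<Rightarrow> 'b) \<Rightarrow> 'a stepfun \<Rightarrow> 'b" where
  "sfold \<phi> \<psi> (Const x) = \<phi> x"
| "sfold \<phi> \<psi> (Glue c f g) = \<psi> c (sfold \<phi> \<psi> f) (sfold \<phi> \<psi> g)"

definition fold_star :: "bool stepfun \<Rightarrow> bool" where
  "fold_star = sfold id (\<lambda>c p q. p \<and> q)"

definition lift2 :: "('a \<Rightarrow> 'b \<Rightarrow> 'c) \<Rightarrow> 'a stepfun \<Rightarrow> 'b stepfun \<Rightarrow> 'c stepfun" where
  "lift2 op f g = ap (smap (\<lambda>u v. op u v) f) g"

definition eqS :: "('a \<Rightarrow> 'a \<Rightarrow> bool) \<Rightarrow> 'a stepfun \<Rightarrow> 'a stepfun \<Rightarrow> bool" where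
  "eqS R f g = fold_star (lift2 R f g)"

lemma size_smap[simp]: "size (smap \<phi> F) = size F"
  by (induction F) auto

function sjoin :: "'a stepfun stepfun \<Rightarrow> 'a stepfun" where
  "sjoin (Const f) = f"
| "sjoin (Glue c F G) =
     Glue c (sjoin (smap (\<lambda>x. SplitL x c) F)) (sjoin (smap (\<lambda>x. SplitR x c) G))"
  by pat_completeness auto
termination
  by (relation "measure size") auto

end

theory Submission
  imports Defs
begin

(* Every formal step function f denotes a function  eval_at f  on the
   rational unit interval [0,1): a glue point o sends [0,o) affinely onto the left
   piece and [o,1) onto the right piece.  All constructions of the monad are
   pointwise for this semantics:
     SplitL f a  is  f  restricted to [0,a),  SplitR f a  is  f  restricted to [a,1),
     F @ x  evaluates to  F(t) (x(t)),   join F  is the diagonal  t |-> F(t)(t),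
   and  fold_star h  holds iff  h  is true everywhere, so  f ~ g  (eqS) means that
   f and g are pointwise related.  Hence every monad law reduces to an identity of
   ordinary functions, and respectfulness to pointwise reasoning in the setoid.
   The file first sets up the two "charts"  u |-> o*u  and  s |-> o + (1-o)*s  of a
   glue point, which cover [0,1); then proves the pointwise descriptions of SplitL,
   SplitR, ap, fold_star, eqS and sjoin; the theorem is then immediate. *)

lemma Rep_oq_bounds: "0 < Rep_oq c" "Rep_oq c < 1"
  using Rep_oq[of c] by auto

lemma Rep_Abs_oq: "0 < q \<Longrightarrow> q < 1 \<Longrightarrow> Rep_oq (Abs_oq q) = q"
  by (simp add: Abs_oq_inverse)

lemma scale_unit_interval:
  fixes a s :: rat
  assumes "0 \<le> a" "a \<le> 1" "s \<in> {0..<1}"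
  shows "a * s \<in> {0..<1}"
proof -
  have "a * s \<le> 1 * s" using assms by (intro mult_right_mono) auto
  then show ?thesis using assms by auto
qed

lemma shift_unit_interval:
  fixes a s :: rat
  assumes "0 \<le> a" "a < 1" "s \<in> {0..<1}"
  shows "a + (1 - a) * s \<in> {0..<1}"
proof -
  define p where "p = (1 - a) * s"
  have "p < 1 - a" "0 \<le> p"
    using assms mult_strict_left_mono[of s 1 "1 - a"] unfolding p_def by auto
  then have "0 \<le> a + p" "a + p < 1" using assms by linarith+
  then show ?thesis by (simp add: p_def)
qed

fun eval_at :: "'a stepfun \<Rightarrow> rat \<Rightarrow> 'a" where
  "eval_at (Const x) t = x"
| "eval_at (Glue c f g) t =
     (if t < Rep_oq c then eval_at f (t / Rep_oq c)
      else eval_at g ((t - Rep_oq c) / (1 - Rep_oq c)))"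

lemma unit_interval_cases:
  fixes p t :: rat
  assumes "0 < p" "p < 1" "t \<in> {0..<1}"
  obtains u where "u \<in> {0..<1}" "t = p * u"
        | s where "s \<in> {0..<1}" "t = p + (1 - p) * s"
proof (cases "t < p")
  case True
  then show ?thesis using assms by (intro that(1)[of "t / p"]) auto
next
  case False
  then show ?thesis using assms by (intro that(2)[of "(t - p) / (1 - p)"]) (auto simp: field_simps)
qed

lemma eval_Glue_left:
  assumes "u \<in> {0..<1}"
  shows "eval_at (Glue c f g) (Rep_oq c * u) = eval_at f u"
proof -
  have "Rep_oq c * u < Rep_oq c * 1"
    using assms Rep_oq_bounds[of c] by (intro mult_strict_left_mono) auto
  then show ?thesis using Rep_oq_bounds[of c] by simp
qed

lemma eval_Glue_right:
  assumes "s \<in> {0..<1}"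
  shows "eval_at (Glue c f g) (Rep_oq c + (1 - Rep_oq c) * s) = eval_at g s"
proof -
  have "0 \<le> (1 - Rep_oq c) * s" using assms Rep_oq_bounds[of c] by simp
  moreover have "(Rep_oq c + (1 - Rep_oq c) * s - Rep_oq c) / (1 - Rep_oq c) = s"
    using Rep_oq_bounds[of c] by simp
  ultimately show ?thesis by simp
qed

text \<open>From now on glues are evaluated only through the charts.\<close>
declare eval_at.simps(2) [simp del]

lemma eval_smap: "eval_at (smap \<phi> f) t = \<phi> (eval_at f t)"
  by (induction f arbitrary: t) (auto simp: eval_at.simps)

lemma eval_SplitL_Glue_left_cut:
  assumes cut: "Rep_oq a < Rep_oq c" and t: "t \<in> {0..<1}"
    and IH: "\<And>a t. t \<in> {0..<1} \<Longrightarrow> eval_at (SplitL fl a) t = eval_at fl (Rep_oq a * t)"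
  shows "eval_at (SplitL (Glue c fl fr) a) t = eval_at (Glue c fl fr) (Rep_oq a * t)"
proof -
  let ?a = "Rep_oq a" and ?c = "Rep_oq c"
  define e where "e = ?a / ?c"
  have e: "0 < e" "e < 1" using cut Rep_oq_bounds[of a] by (auto simp: e_def)
  have "eval_at (SplitL (Glue c fl fr) a) t = eval_at (SplitL fl (Abs_oq e)) t"
    using cut by (simp add: e_def)
  also have "\<dots> = eval_at fl (e * t)"
    using IH[OF t] by (simp add: Rep_Abs_oq[OF e])
  also have "\<dots> = eval_at (Glue c fl fr) (?c * (e * t))"
    using e t by (intro eval_Glue_left[symmetric] scale_unit_interval) auto
  finally show ?thesis using Rep_oq_bounds[of c] by (simp add: e_def)
qed

lemma eval_SplitL_Glue_right_cut:
  assumes cut: "Rep_oq c < Rep_oq a" and t: "t \<in> {0..<1}"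
    and IH: "\<And>a t. t \<in> {0..<1} \<Longrightarrow> eval_at (SplitL fr a) t = eval_at fr (Rep_oq a * t)"
  shows "eval_at (SplitL (Glue c fl fr) a) t = eval_at (Glue c fl fr) (Rep_oq a * t)"
proof -
  let ?a = "Rep_oq a" and ?c = "Rep_oq c"
  define d b where "d = ?c / ?a" and "b = (?a - ?c) / (1 - ?c)"
  have d: "0 < d" "d < 1" and b: "0 < b" "b < 1"
    using cut Rep_oq_bounds[of a] Rep_oq_bounds[of c] by (auto simp: d_def b_def field_simps)
  have split: "SplitL (Glue c fl fr) a = Glue (Abs_oq d) fl (SplitL fr (Abs_oq b))"
    using cut by (simp add: d_def b_def Let_def)
  from d t show ?thesis
  proof (cases rule: unit_interval_cases)
    case (1 u)
    have at: "?a * t = ?c * u" using 1 Rep_oq_bounds[of a] by (simp add: d_def)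
    have "eval_at (SplitL (Glue c fl fr) a) t = eval_at fl u"
      unfolding split 1(2) by (rule eval_Glue_left[OF 1(1), of "Abs_oq d", unfolded Rep_Abs_oq[OF d]])
    also have "\<dots> = eval_at (Glue c fl fr) (?a * t)"
      unfolding at by (rule eval_Glue_left[OF 1(1), symmetric])
    finally show ?thesis .
  next
    case (2 s)
    have bs: "b * s \<in> {0..<1}" using 2 b by (intro scale_unit_interval) auto
    have "?a * t = ?c + (?a - ?c) * s"
      using 2 Rep_oq_bounds[of a] by (simp add: d_def field_simps)
    also have "(?a - ?c) * s = (1 - ?c) * (b * s)"
      using Rep_oq_bounds[of c] by (simp add: b_def)
    finally have at: "?a * t = ?c + (1 - ?c) * (b * s)" .
    have "eval_at (SplitL (Glue c fl fr) a) t = eval_at (SplitL fr (Abs_oq b)) s"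
      unfolding split 2(2) by (rule eval_Glue_right[OF 2(1), of "Abs_oq d", unfolded Rep_Abs_oq[OF d]])
    also have "\<dots> = eval_at fr (b * s)"
      using IH[OF 2(1)] by (simp add: Rep_Abs_oq[OF b])
    also have "\<dots> = eval_at (Glue c fl fr) (?a * t)"
      unfolding at by (rule eval_Glue_right[OF bs, symmetric])
    finally show ?thesis .
  qed
qed

lemma eval_SplitL:
  "t \<in> {0..<1} \<Longrightarrow> eval_at (SplitL f a) t = eval_at f (Rep_oq a * t)"
proof (induction f arbitrary: a t)
  case (Const x)
  then show ?case by simp
next
  case (Glue c fl fr)
  consider "Rep_oq a < Rep_oq c" | "Rep_oq a = Rep_oq c" | "Rep_oq c < Rep_oq a" by linarith
  then show ?case
  proof cases
    case 2
    then have "eval_at (SplitL (Glue c fl fr) a) t = eval_at fl t" by simp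
    also have "\<dots> = eval_at (Glue c fl fr) (Rep_oq c * t)"
      by (rule eval_Glue_left[OF Glue.prems, symmetric])
    finally show ?thesis using 2 by simp
  qed (use eval_SplitL_Glue_left_cut eval_SplitL_Glue_right_cut Glue in blast)+
qed

lemma eval_SplitR_Glue_left_cut:
  assumes cut: "Rep_oq a < Rep_oq c" and t: "t \<in> {0..<1}"
    and IH: "\<And>a t. t \<in> {0..<1} \<Longrightarrow>
      eval_at (SplitR fl a) t = eval_at fl (Rep_oq a + (1 - Rep_oq a) * t)"
  shows "eval_at (SplitR (Glue c fl fr) a) t = eval_at (Glue c fl fr) (Rep_oq a + (1 - Rep_oq a) * t)"
proof -
  let ?a = "Rep_oq a" and ?c = "Rep_oq c"
  define d e where "d = (?c - ?a) / (1 - ?a)" and "e = ?a / ?c"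
  have d: "0 < d" "d < 1" and e: "0 < e" "e < 1"
    using cut Rep_oq_bounds[of a] Rep_oq_bounds[of c] by (auto simp: d_def e_def field_simps)
  have split: "SplitR (Glue c fl fr) a = Glue (Abs_oq d) (SplitR fl (Abs_oq e)) fr"
    using cut by (simp add: d_def e_def Let_def)
  from d t show ?thesis
  proof (cases rule: unit_interval_cases)
    case (1 u)
    have eu: "e + (1 - e) * u \<in> {0..<1}" using 1 e by (intro shift_unit_interval) auto
    have "?a + (1 - ?a) * t = ?a + (?c - ?a) * u" using 1 Rep_oq_bounds[of a] by (simp add: d_def)
    also have "\<dots> = ?c * (e + (1 - e) * u)" using Rep_oq_bounds[of c] by (simp add: e_def algebra_simps)
    finally have at: "?a + (1 - ?a) * t = ?c * (e + (1 - e) * u)" .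
    have "eval_at (SplitR (Glue c fl fr) a) t = eval_at (SplitR fl (Abs_oq e)) u"
      unfolding split 1(2) by (rule eval_Glue_left[OF 1(1), of "Abs_oq d", unfolded Rep_Abs_oq[OF d]])
    also have "\<dots> = eval_at fl (e + (1 - e) * u)"
      using IH[OF 1(1)] by (simp add: Rep_Abs_oq[OF e])
    also have "\<dots> = eval_at (Glue c fl fr) (?a + (1 - ?a) * t)"
      unfolding at by (rule eval_Glue_left[OF eu, symmetric])
    finally show ?thesis .
  next
    case (2 s)
    have "?a + (1 - ?a) * t = ?a + (1 - ?a) * d + (1 - ?a) * (1 - d) * s"
      using 2 by (simp add: distrib_left)
    also have "(1 - ?a) * d = ?c - ?a" using Rep_oq_bounds[of a] by (simp add: d_def)
    also have "(1 - ?a) * (1 - d) = 1 - ?c" using Rep_oq_bounds[of a] by (simp add: d_def field_simps)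
    finally have at: "?a + (1 - ?a) * t = ?c + (1 - ?c) * s" by simp
    have "eval_at (SplitR (Glue c fl fr) a) t = eval_at fr s"
      unfolding split 2(2) by (rule eval_Glue_right[OF 2(1), of "Abs_oq d", unfolded Rep_Abs_oq[OF d]])
    also have "\<dots> = eval_at (Glue c fl fr) (?a + (1 - ?a) * t)"
      unfolding at by (rule eval_Glue_right[OF 2(1), symmetric])
    finally show ?thesis .
  qed
qed

lemma eval_SplitR_Glue_right_cut:
  assumes cut: "Rep_oq c < Rep_oq a" and t: "t \<in> {0..<1}"
    and IH: "\<And>a t. t \<in> {0..<1} \<Longrightarrow>
      eval_at (SplitR fr a) t = eval_at fr (Rep_oq a + (1 - Rep_oq a) * t)"
  shows "eval_at (SplitR (Glue c fl fr) a) t = eval_at (Glue c fl fr) (Rep_oq a + (1 - Rep_oq a) * t)"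
proof -
  let ?a = "Rep_oq a" and ?c = "Rep_oq c"
  define b where "b = (?a - ?c) / (1 - ?c)"
  have b: "0 < b" "b < 1"
    using cut Rep_oq_bounds[of a] Rep_oq_bounds[of c] by (auto simp: b_def field_simps)
  have bt: "b + (1 - b) * t \<in> {0..<1}" using t b by (intro shift_unit_interval) auto
  have "(1 - ?c) * (b + (1 - b) * t) = (1 - ?c) * b + (1 - ?c) * (1 - b) * t"
    by (simp add: distrib_left)
  also have "(1 - ?c) * b = ?a - ?c" using Rep_oq_bounds[of c] by (simp add: b_def)
  also have "(1 - ?c) * (1 - b) = 1 - ?a" using Rep_oq_bounds[of c] by (simp add: b_def field_simps)
  finally have at: "?a + (1 - ?a) * t = ?c + (1 - ?c) * (b + (1 - b) * t)" by simp
  have "eval_at (SplitR (Glue c fl fr) a) t = eval_at (SplitR fr (Abs_oq b)) t"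
    using cut by (simp add: b_def Let_def)
  also have "\<dots> = eval_at fr (b + (1 - b) * t)"
    using IH[OF t] by (simp add: Rep_Abs_oq[OF b])
  also have "\<dots> = eval_at (Glue c fl fr) (?a + (1 - ?a) * t)"
    unfolding at by (rule eval_Glue_right[OF bt, symmetric])
  finally show ?thesis .
qed

lemma eval_SplitR:
  "t \<in> {0..<1} \<Longrightarrow> eval_at (SplitR f a) t = eval_at f (Rep_oq a + (1 - Rep_oq a) * t)"
proof (induction f arbitrary: a t)
  case (Const x)
  then show ?case by simp
next
  case (Glue c fl fr)
  consider "Rep_oq a < Rep_oq c" | "Rep_oq a = Rep_oq c" | "Rep_oq c < Rep_oq a" by linarith
  then show ?case
  proof cases
    case 2
    then have "eval_at (SplitR (Glue c fl fr) a) t = eval_at fr t" by simp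
    also have "\<dots> = eval_at (Glue c fl fr) (Rep_oq c + (1 - Rep_oq c) * t)"
      by (rule eval_Glue_right[OF Glue.prems, symmetric])
    finally show ?thesis using 2 by simp
  qed (use eval_SplitR_Glue_left_cut eval_SplitR_Glue_right_cut Glue in blast)+
qed

lemma eval_ap: "t \<in> {0..<1} \<Longrightarrow> eval_at (ap F x) t = eval_at F t (eval_at x t)"
proof (induction F x arbitrary: t rule: ap.induct)
  case (1 \<phi> x)
  then show ?case by (simp add: eval_smap)
next
  case (2 c Fl Fr x)
  from Rep_oq_bounds[of c] 2(3) show ?case
  proof (cases rule: unit_interval_cases)
    case (1 u)
    then show ?thesis by (simp add: eval_Glue_left "2.IH"(1) eval_SplitL)
  next
    case (2 s)
    then show ?thesis by (simp add: eval_Glue_right "2.IH"(2) eval_SplitR)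
  qed
qed

lemma fold_star_iff_everywhere: "fold_star h \<longleftrightarrow> (\<forall>t \<in> {0..<1}. eval_at h t)"
proof (induction h)
  case (Const x)
  then show ?case by (auto simp: fold_star_def)
next
  case (Glue c f g)
  have "fold_star (Glue c f g) \<longleftrightarrow> fold_star f \<and> fold_star g"
    by (simp add: fold_star_def)
  also have "\<dots> \<longleftrightarrow> (\<forall>t \<in> {0..<1}. eval_at (Glue c f g) t)"
  proof
    assume "fold_star f \<and> fold_star g"
    then have f: "\<forall>u \<in> {0..<1}. eval_at f u" and g: "\<forall>s \<in> {0..<1}. eval_at g s"
      using Glue.IH by auto
    show "\<forall>t \<in> {0..<1}. eval_at (Glue c f g) t"
    proof
      fix t :: rat
      assume "t \<in> {0..<1}"
      with Rep_oq_bounds[of c] show "eval_at (Glue c f g) t"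
        by (cases rule: unit_interval_cases) (simp_all add: eval_Glue_left eval_Glue_right f g)
    qed
  next
    assume all: "\<forall>t \<in> {0..<1}. eval_at (Glue c f g) t"
    have "eval_at f u" if "u \<in> {0..<1}" for u
    proof -
      have "Rep_oq c * u \<in> {0..<1}"
        using Rep_oq_bounds[of c] that by (intro scale_unit_interval) auto
      then have "eval_at (Glue c f g) (Rep_oq c * u)" using all by blast
      then show ?thesis by (simp only: eval_Glue_left[OF that])
    qed
    moreover have "eval_at g s" if "s \<in> {0..<1}" for s
    proof -
      have "Rep_oq c + (1 - Rep_oq c) * s \<in> {0..<1}"
        using Rep_oq_bounds[of c] that by (intro shift_unit_interval) auto
      then have "eval_at (Glue c f g) (Rep_oq c + (1 - Rep_oq c) * s)" using all by blast
      then show ?thesis by (simp only: eval_Glue_right[OF that])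
    qed
    ultimately show "fold_star f \<and> fold_star g"
      using Glue.IH by auto
  qed
  finally show ?case .
qed

lemma eqS_iff_pointwise:
  "eqS R f g \<longleftrightarrow> (\<forall>t \<in> {0..<1}. R (eval_at f t) (eval_at g t))"
  by (simp add: eqS_def lift2_def fold_star_iff_everywhere eval_ap eval_smap)

lemma eval_sjoin: "t \<in> {0..<1} \<Longrightarrow> eval_at (sjoin F) t = eval_at (eval_at F t) t"
proof (induction F arbitrary: t rule: sjoin.induct)
  case (1 f)
  then show ?case by simp
next
  case (2 c F G)
  from Rep_oq_bounds[of c] 2(3) show ?case
  proof (cases rule: unit_interval_cases)
    case (1 u)
    then show ?thesis by (simp add: eval_Glue_left "2.IH"(1) eval_smap eval_SplitL)
  next
    case (2 s)
    then show ?thesis by (simp add: eval_Glue_right "2.IH"(2) eval_smap eval_SplitR)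
  qed
qed

lemma sjoin_respects: "eqS (eqS R) F G \<Longrightarrow> eqS R (sjoin F) (sjoin G)"
  by (simp add: eqS_iff_pointwise eval_sjoin)

lemma smap_respects:
  assumes "\<And>x y. R x y \<Longrightarrow> S (\<phi> x) (\<phi> y)" and "eqS R f g"
  shows "eqS S (smap \<phi> f) (smap \<phi> g)"
  using assms by (simp add: eqS_iff_pointwise eval_smap)

lemma eqS_if_same_eval:
  assumes "reflp R" and "\<And>t. t \<in> {0..<1} \<Longrightarrow> eval_at f t = eval_at g t"
  shows "eqS R f g"
  using assms by (simp add: eqS_iff_pointwise reflpD)

lemma eval_sjoin_smap_Const: "t \<in> {0..<1} \<Longrightarrow> eval_at (sjoin (smap Const f)) t = eval_at f t"
  by (simp add: eval_sjoin eval_smap)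

lemma eval_sjoin_assoc:
  "t \<in> {0..<1} \<Longrightarrow> eval_at (sjoin (sjoin H)) t = eval_at (sjoin (smap sjoin H)) t"
  by (simp add: eval_sjoin eval_smap)

theorem mainTheorem10:
  fixes R :: "'a \<Rightarrow> 'a \<Rightarrow> bool"
  assumes "equivp R"
  shows "(\<forall>F G. eqS (eqS R) F G \<longrightarrow> eqS R (sjoin F) (sjoin G))
    \<and> (\<forall>(S :: 'b \<Rightarrow> 'b \<Rightarrow> bool) (\<phi> :: 'a \<Rightarrow> 'b). equivp S \<longrightarrow>
         (\<forall>x y. R x y \<longrightarrow> S (\<phi> x) (\<phi> y)) \<longrightarrow>
         (\<forall>f g. eqS R f g \<longrightarrow> eqS S (smap \<phi> f) (smap \<phi> g)))
    \<and> (\<forall>f. eqS R (sjoin (Const f)) f)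
    \<and> (\<forall>f. eqS R (sjoin (smap Const f)) f)
    \<and> (\<forall>H. eqS R (sjoin (sjoin H)) (sjoin (smap sjoin H)))"
proof -
  have refl: "reflp R" using assms by (simp add: equivp_reflp_symp_transp)
  have unit_left: "eqS R (sjoin (Const f)) f" for f
    using eqS_if_same_eval[OF refl] by simp
  have unit_right: "eqS R (sjoin (smap Const f)) f" for f
    using eqS_if_same_eval[OF refl eval_sjoin_smap_Const] .
  have assoc: "eqS R (sjoin (sjoin H)) (sjoin (smap sjoin H))" for H
    using eqS_if_same_eval[OF refl eval_sjoin_assoc] .
  show ?thesis
    using sjoin_respects smap_respects[of R] unit_left unit_right assoc by blast
qed

end
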